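(* Assume complete resource pooling and let $B^s=B\prod_{j=1}^J\beta_{s_j}$. For every permutation $(S_1,\ldots,S_J)$ of $\mathcal{S}$, binary words $w_1,\ldots,w_{J-1}$ and nonnegative integers $n_\ell,m_\ell,r_\ell$, with $\alpha_{(\ell)}=\alpha_{\mathcal{U}(\{S_1,\ldots,S_\ell\})}$ and the convention $0^0=1$, the processes $W,U,X,Y,V,R$ defined below have stationary distributions $$\pi_W(S_1,w_1,\ldots,w_{J-1},S_J)=B^s\prod_{\ell=1}^{J-1}\alpha_{(\ell)}^{\#0(w_\ell)}\beta_{\{S_{\ell+1},\ldots,S_J\}}^{\#1(w_\ell)},$$ $$\pi_U(S_1,n_1,m_1,\ldots,n_{J-1},m_{J-1},S_J)=B^s\prod_{\ell=1}^{J-1}\binom{n_\ell+m_\ell}{n_\ell}\alpha_{(\ell)}^{n_\ell}\beta_{\{S_{\ell+1},\ldots,S_J\}}^{m_\ell},$$ $$\pi_X(S_1,n_1,\ldots,n_{J-1},S_J)=B^s\prod_{\ell=1}^{J-1}\frac{\alpha_{(\ell)}^{n_\ell}}{\beta_{\{S_1,\ldots,S_\ell\}}^{n_\ell+1}},\qquad \pi_Y(S_1,m_1,\ldots,m_{J-1},S_J)=B^s\prod_{\ell=1}^{J-1}\frac{\beta_{\{S_{\ell+1},\ldots,S_J\}}^{m_\ell}}{\alpha_{\mathcal{C}(\{S_{\ell+1},\ldots,S_J\})}^{m_\ell+1}},$$ $$\pi_V(S_1,r_1,\ldots,r_{J-1},S_J)=B^s\prod_{\ell=1}^{J-1}\big(\alpha_{(\ell)}+\beta_{\{S_{\ell+1},\ldots,S_J\}}\big)^{r_\ell},\qquad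 \pi_R(S_1,\ldots,S_J)=B^s\prod_{\ell=1}^{J-1}\big(\beta_{\{S_1,\ldots,S_\ell\}}-\alpha_{(\ell)}\big)^{-1}.$$
   Context: Setting: finite type sets $\mathcal{C}=\{c_1,\ldots,c_I\}$, $\mathcal{S}=\{s_1,\ldots,s_J\}$, connected bipartite compatibility graph $G=(\mathcal{C},\mathcal{S},\mathcal{E})$, independent i.i.d. sequences $(c^m)_{m\in\mathbb{Z}}\sim\alpha$, $(s^n)_{n\in\mathbb{Z}}\sim\beta$ with positive probabilities. Notation: $\mathcal{C}(S)$ = customer types compatible with some type in $S$; $\mathcal{U}(S)=\mathcal{C}\setminus\mathcal{C}(\mathcal{S}\setminus S)$; $\alpha_C=\sum_{c\in C}\alpha_c$, $\beta_S=\sum_{s\in S}\beta_s$. Complete resource pooling: $\beta_S>\alpha_{\mathcal{U}(S)}$ for all nonempty proper $S\subsetneq\mathcal{S}$. $A$ is the a.s. unique (perfect) FCFS matching over $\mathbb{Z}$ (for each $(m,n)\in A$, every compatible $s^l$, $l<n$, is matched to some $c^k$, $k<m$, and every compatible $c^k$, $k<m$, to some $s^l$, $l<n$); for $(m,n)\in A$, $\tilde{s}^m=s^n$. At time $N$ customer-line position $m$ holds $\tilde{s}^m$ if $c^m$ is matched to a server of index $\le N$ ("exchanged server") and $c^m$ otherwise ("unmatched customer"). $\underline{M}$ = first position with an unmatched customer, $\overline{M}$ = last position with an exchanged server, $\underline{N}$ = largest $p\le\overline{M}$ such that positions $p,\ldots,\overline{M}$ contain exchanged servers of all $J$ types. $\mathcal{Z}_N$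 is the word in positions $\underline{N},\ldots,\overline{M}$; it has stationary distribution $\pi_{\mathcal{Z}}(\mathfrak{z})=B\prod_i\alpha_{c_i}^{\#c_i}\prod_j\beta_{s_j}^{\#s_j}$ for a constant $B>0$ (counts of types in $\mathfrak{z}$). Write $\mathcal{Z}_N=(S_1,\mathfrak{w}_1,S_2,\ldots,\mathfrak{w}_{J-1},S_J)$: $S_J$ is the type of the last entry $\tilde{s}^{\overline{M}}$, and recursively, for $j<J$, $S_j$ is the type of the last exchanged server in the word whose type differs from $S_{j+1},\ldots,S_J$; $\mathfrak{w}_\ell$ is the subword strictly between the occurrences of $S_\ell$ and $S_{\ell+1}$. $W_N=(S_1,w_1,\ldots,w_{J-1},S_J)$ where $w_\ell$ replaces each unmatched customer of $\mathfrak{w}_\ell$ by $0$ and each exchanged server by $1$; $\#0(w)$, $\#1(w)$ count zeros and ones. $X_N=(S_1,n_1,\ldots,n_{J-1},S_J)$ with $n_\ell=\#0(w_\ell)$; $Y_N=(S_1,m_1,\ldots,m_{J-1},S_J)$ with $m_\ell=\#1(w_\ell)$; $U_N=(S_1,n_1,m_1,\ldots,n_{J-1},m_{J-1},S_J)$; $V_N=(S_1,n_1+m_1,\ldots,n_{J-1}+m_{J-1},S_J)$; $R_N=(S_1,\ldots,S_J)$. *)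

theory Defs
  imports "HOL-Probability.Probability_Mass_Function"
begin

text \<open>Letters of the word Z_N: an unmatched customer of type c, or an exchanged server of type s.\<close>
datatype ('c, 's) letter = Cust 'c | Serv 's

text \<open>Compatibility graph: E c s means customer type c and server type s are compatible.\<close>
definition bip_adj :: "('c \<Rightarrow> 's \<Rightarrow> bool) \<Rightarrow> ('c + 's) \<Rightarrow> ('c + 's) \<Rightarrow> bool" where
  "bip_adj E x y \<longleftrightarrow> (\<exists>c s. (x = Inl c \<and> y = Inr s \<or> x = Inr s \<and> y = Inl c) \<and> E c s)"

definition bip_connected :: "('c \<Rightarrow> 's \<Rightarrow> bool) \<Rightarrow> bool" where
  "bip_connected E \<longleftrightarrow> (\<forall>x y. (bip_adj E)\<^sup>*\<^sup>* x y)"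

definition Cset :: "('c \<Rightarrow> 's \<Rightarrow> bool) \<Rightarrow> 's set \<Rightarrow> 'c set" where
  "Cset E T = {c. \<exists>s\<in>T. E c s}"

definition Uset :: "('c \<Rightarrow> 's \<Rightarrow> bool) \<Rightarrow> 's set \<Rightarrow> 'c set" where
  "Uset E T = UNIV - Cset E (UNIV - T)"

definition complete_resource_pooling ::
  "('c::finite \<Rightarrow> 's::finite \<Rightarrow> bool) \<Rightarrow> ('c \<Rightarrow> real) \<Rightarrow> ('s \<Rightarrow> real) \<Rightarrow> bool" where
  "complete_resource_pooling E \<alpha> \<beta> \<longleftrightarrow>
     (\<forall>T. T \<noteq> {} \<and> T \<noteq> UNIV \<longrightarrow> sum \<beta> T > sum \<alpha> (Uset E T))"

definition letter_weight :: "('c \<Rightarrow> real) \<Rightarrow> ('s \<Rightarrow> real) \<Rightarrow> ('c, 's) letter \<Rightarrow> real" where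
  "letter_weight \<alpha> \<beta> x = (case x of Cust c \<Rightarrow> \<alpha> c | Serv s \<Rightarrow> \<beta> s)"

definition zweight :: "('c \<Rightarrow> real) \<Rightarrow> ('s \<Rightarrow> real) \<Rightarrow> ('c, 's) letter list \<Rightarrow> real" where
  "zweight \<alpha> \<beta> z = prod_list (map (letter_weight \<alpha> \<beta>) z)"

text \<open>State space of Z_N: words S_1 w_1 S_2 ... w_{J-1} S_J with (S_1,...,S_J) a permutation
  of the server types, where w_l (l = 1..J-1) consists of unmatched customers with types in
  U({S_1..S_l}) and exchanged servers with types in {S_{l+1},...,S_J}.
  Lists are 0-indexed: segment index l here corresponds to l+1 in the paper.\<close>
definition assemble :: "'s list \<Rightarrow> ('c, 's) letter list list \<Rightarrow> ('c, 's) letter list" where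
  "assemble S ws = Serv (hd S) # concat (map2 (\<lambda>w s. w @ [Serv s]) ws (tl S))"

definition admissible_seg :: "('c \<Rightarrow> 's \<Rightarrow> bool) \<Rightarrow> 's list \<Rightarrow> nat \<Rightarrow> ('c, 's) letter list \<Rightarrow> bool" where
  "admissible_seg E S l w \<longleftrightarrow>
     (\<forall>x\<in>set w. case x of Cust c \<Rightarrow> c \<in> Uset E (set (take (Suc l) S))
                        | Serv s \<Rightarrow> s \<in> set (drop (Suc l) S))"

definition Zspace :: "('c \<Rightarrow> 's::finite \<Rightarrow> bool) \<Rightarrow> ('c, 's) letter list set" where
  "Zspace E = {assemble S ws | S ws. distinct S \<and> set S = UNIV \<and> length ws = CARD('s) - 1
                 \<and> (\<forall>l < length ws. admissible_seg E S l (ws ! l))}"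

text \<open>Parsing a word as in the paper: S_J is the type of the last server; S_j is the type of the
  last server whose type differs from S_{j+1},...,S_J (i.e. server types ordered by last
  occurrence); w_l is the subword strictly between the (last) occurrences of S_l and S_{l+1}.\<close>
definition serv_types :: "('c, 's) letter list \<Rightarrow> 's list" where
  "serv_types z = List.map_filter (\<lambda>x. case x of Serv s \<Rightarrow> Some s | Cust _ \<Rightarrow> None) z"

definition Sseq :: "('c, 's) letter list \<Rightarrow> 's list" where
  "Sseq z = remdups (serv_types z)"

definition lastpos :: "('c, 's) letter list \<Rightarrow> 's \<Rightarrow> nat" where
  "lastpos z s = Max {i. i < length z \<and> z ! i = Serv s}"

definition seg :: "('c, 's) letter list \<Rightarrow> nat \<Rightarrow> ('c, 's) letter list" where
  "seg z l = (let a = lastpos z (Sseq z ! l); b = lastpos z (Sseq z ! Suc l)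
              in take (b - a - 1) (drop (Suc a) z))"

definition segs :: "('c, 's) letter list \<Rightarrow> ('c, 's) letter list list" where
  "segs z = map (seg z) [0..<length (Sseq z) - 1]"

text \<open>Binary encoding: unmatched customer \<mapsto> 0 (False), exchanged server \<mapsto> 1 (True).\<close>
definition is_serv :: "('c, 's) letter \<Rightarrow> bool" where
  "is_serv x = (case x of Serv _ \<Rightarrow> True | Cust _ \<Rightarrow> False)"

definition binw :: "('c, 's) letter list \<Rightarrow> bool list" where
  "binw w = map is_serv w"

definition n0 :: "bool list \<Rightarrow> nat" where "n0 w = length (filter Not w)"
definition n1 :: "bool list \<Rightarrow> nat" where "n1 w = length (filter id w)"

definition W_of :: "('c, 's) letter list \<Rightarrow> 's list \<times> bool list list" where
  "W_of z = (Sseq z, map binw (segs z))"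
definition U_of :: "('c, 's) letter list \<Rightarrow> 's list \<times> (nat \<times> nat) list" where
  "U_of z = (Sseq z, map (\<lambda>w. (n0 (binw w), n1 (binw w))) (segs z))"
definition X_of :: "('c, 's) letter list \<Rightarrow> 's list \<times> nat list" where
  "X_of z = (Sseq z, map (\<lambda>w. n0 (binw w)) (segs z))"
definition Y_of :: "('c, 's) letter list \<Rightarrow> 's list \<times> nat list" where
  "Y_of z = (Sseq z, map (\<lambda>w. n1 (binw w)) (segs z))"
definition V_of :: "('c, 's) letter list \<Rightarrow> 's list \<times> nat list" where
  "V_of z = (Sseq z, map (\<lambda>w. n0 (binw w) + n1 (binw w)) (segs z))"
definition R_of :: "('c, 's) letter list \<Rightarrow> 's list" where
  "R_of z = Sseq z"

end

theory Submission
  imports Defs "HOL-Analysis.Generalised_Binomial_Theorem"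
begin

text \<open>
  A state of Z_N is the same thing as a permutation (S_1, ..., S_J) of the server types together
  with J - 1 independent segments, where w_l is an arbitrary word over the unmatched customers of
  types in U({S_1, ..., S_l}) and the exchanged servers of types in {S_{l+1}, ..., S_J}.  The
  product-form weight of a word factorises accordingly, so every marginal is B times the product of
  all server probabilities times a product of per-segment sums.  Fixing the 0/1 pattern of a segment gives a monomial, fixing the
  two counts adds a binomial coefficient, fixing the length gives a power of the alphabet mass, and
  summing out one or both counts gives negative binomial or geometric series.  These converge
  because complete resource pooling yields
  \<alpha>(U({S_1, ..., S_l})) < \<beta>({S_1, ..., S_l}) = 1 - \<beta>({S_{l+1}, ..., S_J}).
\<close>

section \<open>Parsing a word into its server order and segments\<close>

lemma serv_types_simps [simp]:
  "serv_types [] = []"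
  "serv_types (Serv s # xs) = s # serv_types xs"
  "serv_types (Cust c # xs) = serv_types xs"
  "serv_types (xs @ ys) = serv_types xs @ serv_types ys"
  by (simp_all add: serv_types_def map_filter_def)

lemma set_serv_types: "set (serv_types z) = {s. Serv s \<in> set z}"
proof (induction z)
  case (Cons x z)
  then show ?case by (cases x) auto
qed simp

lemma lastpos_append:
  assumes "Serv s \<in> set ys"
  shows "lastpos (xs @ ys) s = length xs + lastpos ys s"
proof -
  let ?I = "{i. i < length ys \<and> ys ! i = Serv s}"
  have last_in: "lastpos ys s \<in> ?I"
    unfolding lastpos_def using assms by (intro Max_in) (auto simp: in_set_conv_nth)
  show ?thesis
    unfolding lastpos_def[of "xs @ ys"]
  proof (rule Max_eqI)
    fix i assume i: "i \<in> {i. i < length (xs @ ys) \<and> (xs @ ys) ! i = Serv s}"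
    show "i \<le> length xs + lastpos ys s"
    proof (cases "i < length xs")
      case False
      then have "i - length xs \<in> ?I" using i by (auto simp: nth_append)
      then have "i - length xs \<le> lastpos ys s" unfolding lastpos_def by (intro Max_ge) auto
      then show ?thesis by simp
    qed simp
  qed (use last_in in \<open>auto simp: nth_append\<close>)
qed

lemma lastpos_Cons_self:
  assumes "Serv s \<notin> set xs"
  shows "lastpos (Serv s # xs) s = 0"
  unfolding lastpos_def
proof (rule Max_eqI)
  fix i assume "i \<in> {i. i < length (Serv s # xs) \<and> (Serv s # xs) ! i = Serv s}"
  then show "i \<le> 0" using assms by (cases i) (auto simp: in_set_conv_nth)
qed auto

definition servers_ahead :: "'s list \<Rightarrow> ('c, 's) letter list list \<Rightarrow> bool" where
  "servers_ahead S ws \<longleftrightarrow> (\<forall>l<length ws. \<forall>s. Serv s \<in> set (ws ! l) \<longrightarrow> s \<in> set (drop (Suc l) S))"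

lemma servers_ahead_Cons:
  "servers_ahead (s0 # S) (w # ws) \<longleftrightarrow> (\<forall>s. Serv s \<in> set w \<longrightarrow> s \<in> set S) \<and> servers_ahead S ws"
  by (auto simp: servers_ahead_def less_Suc_eq_0_disj)

lemma assemble_singleton [simp]: "assemble [s] ws = [Serv s]"
  by (simp add: assemble_def)

lemma assemble_Cons_Cons [simp]:
  "assemble (s0 # s1 # S) (w # ws) = Serv s0 # w @ assemble (s1 # S) ws"
  by (simp add: assemble_def)

lemma zweight_assemble:
  "length S = Suc (length ws) \<Longrightarrow>
     zweight \<alpha> \<beta> (assemble S ws) = prod_list (map \<beta> S) * prod_list (map (zweight \<alpha> \<beta>) ws)"
proof (induction ws arbitrary: S)
  case Nil
  then show ?case by (cases S) (auto simp: zweight_def letter_weight_def)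
next
  case (Cons w ws)
  then obtain s0 s1 S' where "S = s0 # s1 # S'" by (metis length_Suc_conv)
  with Cons show ?case by (simp add: zweight_def letter_weight_def)
qed

lemma set_serv_types_assemble:
  "length S = Suc (length ws) \<Longrightarrow> servers_ahead S ws \<Longrightarrow> set (serv_types (assemble S ws)) = set S"
proof (induction ws arbitrary: S)
  case Nil
  then show ?case by (cases S) auto
next
  case (Cons w ws)
  then obtain s0 s1 S' where "S = s0 # s1 # S'" by (metis length_Suc_conv)
  with Cons show ?case by (auto simp: servers_ahead_Cons set_serv_types)
qed

lemma Sseq_assemble:
  "distinct S \<Longrightarrow> length S = Suc (length ws) \<Longrightarrow> servers_ahead S ws \<Longrightarrow> Sseq (assemble S ws) = S"
proof (induction ws arbitrary: S)
  case Nil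
  then show ?case by (cases S) (auto simp: Sseq_def)
next
  case (Cons w ws)
  then obtain s0 s1 S' where S: "S = s0 # s1 # S'" by (metis length_Suc_conv)
  let ?z' = "assemble (s1 # S') ws"
  have z': "set (serv_types ?z') = set (s1 # S')" "Sseq ?z' = s1 # S'"
    using Cons by (simp_all add: S servers_ahead_Cons set_serv_types_assemble)
  have "set (serv_types w) \<subseteq> set (serv_types ?z')"
    using Cons.prems(3) z' by (auto simp: S servers_ahead_Cons set_serv_types)
  then have "remdups (serv_types w @ serv_types ?z') = s1 # S'"
    using z' by (simp add: remdups_append Sseq_def)
  moreover have "s0 \<notin> set (serv_types w @ serv_types ?z')"
    using Cons.prems(1,3) z' by (auto simp: S servers_ahead_Cons set_serv_types)
  ultimately show ?case by (simp add: S Sseq_def)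
qed

lemma lastpos_assemble_hd:
  assumes "distinct (s # S)" "length (s # S) = Suc (length ws)" "servers_ahead (s # S) ws"
  shows "lastpos (assemble (s # S) ws) s = 0"
proof (cases ws)
  case Nil
  then show ?thesis using assms lastpos_Cons_self[of s "[]"] by (cases S) auto
next
  case (Cons w ws')
  with assms obtain s1 S' where S: "S = s1 # S'" by (cases S) auto
  have "set (serv_types (assemble S ws')) = set S"
    using assms by (intro set_serv_types_assemble) (auto simp: Cons servers_ahead_Cons)
  then have "Serv s \<notin> set (w @ assemble S ws')"
    using assms by (auto simp: Cons servers_ahead_Cons set_serv_types)
  then show ?thesis by (simp add: Cons S lastpos_Cons_self)
qed

lemma segs_assemble:
  "distinct S \<Longrightarrow> length S = Suc (length ws) \<Longrightarrow> servers_ahead S ws \<Longrightarrow> segs (assemble S ws) = ws"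
proof (induction ws arbitrary: S)
  case Nil
  then show ?case by (cases S) (auto simp: segs_def Sseq_def)
next
  case (Cons w ws)
  then obtain s0 s1 S' where S: "S = s0 # s1 # S'" by (metis length_Suc_conv)
  let ?z' = "assemble (s1 # S') ws"
  let ?z = "assemble S (w # ws)"
  have prems': "distinct (s1 # S')" "length (s1 # S') = Suc (length ws)"
    "servers_ahead (s1 # S') ws"
    using Cons.prems by (auto simp: S servers_ahead_Cons)
  have Sseq_z: "Sseq ?z = S" using Cons.prems by (rule Sseq_assemble)
  have lastpos_z: "lastpos ?z t = Suc (length w) + lastpos ?z' t" if "t \<in> set (s1 # S')" for t
  proof -
    have "Serv t \<in> set ?z'"
      using that set_serv_types_assemble[OF prems'(2,3)] by (auto simp: set_serv_types)
    then show ?thesis using lastpos_append[of t ?z' "Serv s0 # w"] by (simp add: S)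
  qed
  have seg_0: "seg ?z 0 = w"
  proof -
    have "lastpos ?z s0 = 0" using Cons.prems unfolding S by (rule lastpos_assemble_hd)
    moreover have "lastpos ?z s1 = Suc (length w)"
      using lastpos_z[of s1] lastpos_assemble_hd[OF prems'] by simp
    ultimately show ?thesis unfolding seg_def Let_def Sseq_z by (simp add: S)
  qed
  have seg_Suc: "seg ?z (Suc l) = seg ?z' l" if "l < length ws" for l
  proof -
    have in_S': "(s1 # S') ! l \<in> set (s1 # S')" "(s1 # S') ! Suc l \<in> set (s1 # S')"
      using that prems'(2) by (intro nth_mem; simp)+
    have S_nth: "S ! Suc l = (s1 # S') ! l" "S ! Suc (Suc l) = (s1 # S') ! Suc l"
      by (simp_all add: S)
    show ?thesis
      unfolding seg_def Let_def Sseq_z Sseq_assemble[OF prems'] S_nth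
        lastpos_z[OF in_S'(1)] lastpos_z[OF in_S'(2)]
      by (simp add: S)
  qed
  have "segs ?z = seg ?z 0 # map (seg ?z \<circ> Suc) [0..<length ws]"
    unfolding segs_def Sseq_z using Cons.prems(2)
    by (simp add: upt_conv_Cons map_Suc_upt[symmetric] del: upt_Suc)
  also have "map (seg ?z \<circ> Suc) [0..<length ws] = segs ?z'"
    using prems' by (auto simp: segs_def Sseq_assemble seg_Suc)
  finally show ?case using Cons.IH[OF prems'] seg_0 by simp
qed

section \<open>Weighted sums of segment words\<close>

definition letters :: "'c set \<Rightarrow> 's set \<Rightarrow> ('c, 's) letter set" where
  "letters Ua Sb = Cust ` Ua \<union> Serv ` Sb"

lemma zweight_Nil [simp]: "zweight \<alpha> \<beta> [] = 1"
  and zweight_Cons [simp]: "zweight \<alpha> \<beta> (x # w) = letter_weight \<alpha> \<beta> x * zweight \<alpha> \<beta> w"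
  by (simp_all add: zweight_def)

lemma zweight_nonneg:
  assumes "\<And>c. 0 \<le> \<alpha> c" "\<And>s. 0 \<le> \<beta> s"
  shows "0 \<le> zweight \<alpha> \<beta> w"
  unfolding zweight_def using assms
  by (intro prod_list_nonneg) (auto simp: letter_weight_def split: letter.splits)

lemma sum_letter_weight_letters:
  "finite Ua \<Longrightarrow> finite Sb \<Longrightarrow> sum (letter_weight \<alpha> \<beta>) (letters Ua Sb) = sum \<alpha> Ua + sum \<beta> Sb"
  unfolding letters_def
  by (subst sum.union_disjoint) (auto simp: sum.reindex inj_on_def letter_weight_def)

lemma has_sum_zweight_list_all2:
  assumes "\<forall>L\<in>set Ls. finite L"
  shows "(zweight \<alpha> \<beta> has_sum (\<Prod>L\<leftarrow>Ls. sum (letter_weight \<alpha> \<beta>) L))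
           {w. list_all2 (\<lambda>x L. x \<in> L) w Ls}"
proof -
  have "finite {w. list_all2 (\<lambda>x L. x \<in> L) w Ls} \<and>
        sum (zweight \<alpha> \<beta>) {w. list_all2 (\<lambda>x L. x \<in> L) w Ls} = (\<Prod>L\<leftarrow>Ls. sum (letter_weight \<alpha> \<beta>) L)"
    using assms
  proof (induction Ls)
    case Nil
    have "{w. list_all2 (\<lambda>x L. x \<in> L) w []} = {[]}" by auto
    then show ?case by simp
  next
    case (Cons L Ls)
    let ?R = "{w. list_all2 (\<lambda>x L. x \<in> L) w Ls}"
    have eq: "{w. list_all2 (\<lambda>x L. x \<in> L) w (L # Ls)} = (\<lambda>(x, w). x # w) ` (L \<times> ?R)"
      by (auto simp: list_all2_Cons2)
    have inj: "inj_on (\<lambda>(x, w). x # w) (L \<times> ?R)" by (auto simp: inj_on_def)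
    have "sum (zweight \<alpha> \<beta>) ((\<lambda>(x, w). x # w) ` (L \<times> ?R))
          = (\<Sum>(x, w)\<in>L \<times> ?R. letter_weight \<alpha> \<beta> x * zweight \<alpha> \<beta> w)"
      unfolding sum.reindex[OF inj] by (simp add: case_prod_unfold)
    also have "\<dots> = (\<Sum>x\<in>L. \<Sum>w\<in>?R. letter_weight \<alpha> \<beta> x * zweight \<alpha> \<beta> w)"
      by (rule sum.cartesian_product[symmetric])
    also have "\<dots> = sum (letter_weight \<alpha> \<beta>) L * sum (zweight \<alpha> \<beta>) ?R"
      by (simp add: sum_product)
    finally show ?case using eq Cons by simp
  qed
  then show ?thesis by (simp add: has_sum_finiteI)
qed

lemma list_all2_letters_pattern:
  "list_all2 (\<lambda>x L. x \<in> L) w (map (\<lambda>b. if b then Serv ` Sb else Cust ` Ua) bs)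
     \<longleftrightarrow> set w \<subseteq> letters Ua Sb \<and> binw w = bs"
proof (induction bs arbitrary: w)
  case Nil
  then show ?case by (auto simp: binw_def)
next
  case (Cons b bs)
  then show ?case
    by (cases w) (auto simp: binw_def letters_def is_serv_def split: letter.splits)
qed

lemma n0_n1_simps [simp]:
  "n0 [] = 0" "n1 [] = 0" "n0 (True # bs) = n0 bs" "n1 (True # bs) = Suc (n1 bs)"
  "n0 (False # bs) = Suc (n0 bs)" "n1 (False # bs) = n1 bs"
  by (simp_all add: n0_def n1_def)

lemma n0_add_n1: "n0 bs + n1 bs = length bs"
  by (induction bs) (auto simp: n0_def n1_def)

lemma has_sum_zweight_pattern:
  assumes "finite Ua" "finite Sb"
  shows "(zweight \<alpha> \<beta> has_sum (sum \<alpha> Ua ^ n0 bs * sum \<beta> Sb ^ n1 bs))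
           {w. set w \<subseteq> letters Ua Sb \<and> binw w = bs}"
proof -
  let ?Ls = "map (\<lambda>b. if b then Serv ` Sb else Cust ` Ua) bs"
  have "(\<Prod>L\<leftarrow>?Ls. sum (letter_weight \<alpha> \<beta>) L) = sum \<alpha> Ua ^ n0 bs * sum \<beta> Sb ^ n1 bs"
    by (induction bs) (auto simp: sum.reindex inj_on_def letter_weight_def)
  moreover have "\<forall>L\<in>set ?Ls. finite L" using assms by auto
  ultimately show ?thesis
    using has_sum_zweight_list_all2[of ?Ls \<alpha> \<beta>] by (simp add: list_all2_letters_pattern)
qed

lemma has_sum_zweight_length:
  assumes "finite Ua" "finite Sb"
  shows "(zweight \<alpha> \<beta> has_sum (sum \<alpha> Ua + sum \<beta> Sb) ^ r) {w. set w \<subseteq> letters Ua Sb \<and> length w = r}"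
proof -
  have "list_all2 (\<lambda>x L. x \<in> L) w (replicate r L) \<longleftrightarrow> set w \<subseteq> L \<and> length w = r"
    for w and L :: "('c, 's) letter set"
    by (induction r arbitrary: w) (auto simp: list_all2_Cons2 length_Suc_conv)
  then have eq: "{w. list_all2 (\<lambda>x L. x \<in> L) w (replicate r L)} = {w. set w \<subseteq> L \<and> length w = r}"
    for L :: "('c, 's) letter set"
    by blast
  have "finite (letters Ua Sb)" using assms by (simp add: letters_def)
  then show ?thesis
    using has_sum_zweight_list_all2[of "replicate r (letters Ua Sb)" \<alpha> \<beta>]
    unfolding eq by (simp add: sum_letter_weight_letters[OF assms] prod_list_replicate)
qed

lemma card_bool_lists_n1: "card {bs::bool list. length bs = k \<and> n1 bs = m} = k choose m"
proof (induction k arbitrary: m)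
  case 0
  have "{bs::bool list. length bs = 0 \<and> n1 bs = m} = (if m = 0 then {[]} else {})" by auto
  then show ?case by simp
next
  case (Suc k)
  let ?T = "\<lambda>m. {bs::bool list. length bs = k \<and> n1 bs = m}"
  have fin: "finite (?T m)" for m
    by (rule finite_subset[OF _ finite_lists_length_eq[of "UNIV :: bool set" k]]) auto
  have split: "{bs. length bs = Suc k \<and> n1 bs = m} =
      Cons True ` {bs. length bs = k \<and> Suc (n1 bs) = m} \<union> Cons False ` ?T m"
  proof (rule set_eqI)
    fix bs :: "bool list"
    show "bs \<in> {bs. length bs = Suc k \<and> n1 bs = m} \<longleftrightarrow>
        bs \<in> Cons True ` {bs. length bs = k \<and> Suc (n1 bs) = m} \<union> Cons False ` ?T m"
    proof (cases bs)
      case (Cons b bs')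
      then show ?thesis by (cases b) (auto simp: image_iff)
    qed auto
  qed
  have shift: "{bs. length bs = k \<and> Suc (n1 bs) = m} = (if m = 0 then {} else ?T (m - 1))"
    by auto
  show ?case
    unfolding split shift using Suc.IH
    by (subst card_Un_disjoint) (auto simp: fin card_image gr0_conv_Suc)
qed

lemma has_sum_zweight_counts:
  assumes "finite Ua" "finite Sb"
  shows "(zweight \<alpha> \<beta> has_sum (real ((n + m) choose n) * sum \<alpha> Ua ^ n * sum \<beta> Sb ^ m))
           {w. set w \<subseteq> letters Ua Sb \<and> n0 (binw w) = n \<and> n1 (binw w) = m}"
proof -
  let ?A = "{w. set w \<subseteq> letters Ua Sb \<and> n0 (binw w) = n \<and> n1 (binw w) = m}"
  let ?T = "{bs::bool list. length bs = n + m \<and> n1 bs = m}"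
  have length_binw: "length (binw w) = length w" for w :: "('c, 's) letter list"
    by (simp add: binw_def)
  have "?A \<subseteq> {w. set w \<subseteq> letters Ua Sb \<and> length w = n + m}"
    by (auto simp: n0_add_n1 length_binw)
  then have fin_A: "finite ?A"
    by (rule finite_subset) (simp add: finite_lists_length_eq assms letters_def)
  have fin_T: "finite ?T"
    by (rule finite_subset[OF _ finite_lists_length_eq[of "UNIV :: bool set" "n + m"]]) auto
  have "sum (zweight \<alpha> \<beta>) ?A = (\<Sum>bs\<in>?T. sum (zweight \<alpha> \<beta>) {w \<in> ?A. binw w = bs})"
    by (rule sum.group[symmetric]) (use fin_A fin_T in \<open>auto simp: n0_add_n1 length_binw\<close>)
  also have "\<dots> = (\<Sum>bs\<in>?T. sum \<alpha> Ua ^ n * sum \<beta> Sb ^ m)"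
  proof (rule sum.cong)
    fix bs assume bs: "bs \<in> ?T"
    then have "n0 bs = n" using n0_add_n1[of bs] by simp
    with bs have eq: "{w. set w \<subseteq> letters Ua Sb \<and> binw w = bs} = {w \<in> ?A. binw w = bs}"
      by auto
    have "finite {w \<in> ?A. binw w = bs}" using fin_A by (rule finite_subset[rotated]) auto
    then show "sum (zweight \<alpha> \<beta>) {w \<in> ?A. binw w = bs} = sum \<alpha> Ua ^ n * sum \<beta> Sb ^ m"
      using has_sum_zweight_pattern[OF assms, of \<alpha> \<beta> bs] bs \<open>n0 bs = n\<close>
      unfolding eq by (simp add: has_sum_finite_iff)
  qed simp
  finally show ?thesis
    using fin_A
    by (simp add: has_sum_finite_iff card_bool_lists_n1 binomial_symmetric[of m "n + m"])
qed

lemma has_sum_nonneg_fibres: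
  fixes f :: "'a \<Rightarrow> real" and h :: "'a \<Rightarrow> 'b"
  assumes nonneg: "\<And>x. x \<in> A \<Longrightarrow> 0 \<le> f x"
    and fibres: "\<And>k. (f has_sum s k) {x \<in> A. h x = k}"
    and total: "(s has_sum t) UNIV"
  shows "(f has_sum t) A"
proof -
  let ?F = "\<lambda>(k, x). f x"
  have bij: "bij_betw (\<lambda>x. (h x, x)) A (SIGMA k:UNIV. {x \<in> A. h x = k})"
    by (rule bij_betwI[where g = snd]) auto
  have "?F summable_on (SIGMA k:UNIV. {x \<in> A. h x = k})"
    using fibres total nonneg
    by (intro summable_on_SigmaI[where g = s]) (auto dest: has_sum_imp_summable)
  then have "(?F has_sum t) (SIGMA k:UNIV. {x \<in> A. h x = k})"
    using fibres total by (intro has_sum_SigmaI[where g = s]) auto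
  then show ?thesis
    using has_sum_reindex_bij_betw[OF bij, of ?F] by simp
qed

lemma has_sum_negative_binomial:
  fixes x :: real
  assumes "0 \<le> x" "x < 1"
  shows "((\<lambda>m. real ((n + m) choose n) * x ^ m) has_sum (1 / (1 - x) ^ Suc n)) UNIV"
proof -
  have coeff: "(- (real n + 1) gchoose m) * (- x) ^ m = real ((n + m) choose n) * x ^ m" for m
  proof -
    have "(- (real n + 1) gchoose m) = (-1) ^ m * (real (n + m) gchoose m)"
      using gbinomial_minus[of "real n + 1" m] by (simp add: add_ac)
    then have "(- (real n + 1) gchoose m) = (-1) ^ m * real ((n + m) choose m)"
      by (simp add: binomial_gbinomial)
    moreover have "(n + m) choose m = (n + m) choose n"
      using binomial_symmetric[of n "n + m"] by simp
    moreover have "(- x) ^ m = (-1) ^ m * x ^ m"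
      by (rule power_minus)
    moreover have "(-1::real) ^ m * (-1) ^ m = 1"
      by (simp flip: power_add)
    ultimately show ?thesis
      by (metis mult.assoc mult.left_commute mult_1)
  qed
  have "(1 - x) powr (real n + 1) = (1 - x) ^ Suc n"
    using assms powr_realpow[of "1 - x" "Suc n"] by (simp add: add.commute)
  then have "1 / (1 - x) ^ Suc n = (1 + - x) powr (- (real n + 1))"
    by (simp only: powr_minus_divide diff_conv_add_uminus)
  moreover have "(\<lambda>m. real ((n + m) choose n) * x ^ m)
                   = (\<lambda>m. (- (real n + 1) gchoose m) * (- x) ^ m)"
    by (simp only: coeff)
  ultimately have "(\<lambda>m. real ((n + m) choose n) * x ^ m) sums (1 / (1 - x) ^ Suc n)"
    using gen_binomial_real[of "- x" "- (real n + 1)"] assms by simp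
  then show ?thesis
    by (rule sums_nonneg_imp_has_sum) (use assms in simp)
qed


lemma has_sum_geometric:
  fixes x :: real
  assumes "0 \<le> x" "x < 1"
  shows "((\<lambda>r. x ^ r) has_sum (1 / (1 - x))) UNIV"
  by (rule sums_nonneg_imp_has_sum) (use geometric_sums[of x] assms in auto)

lemma has_sum_zweight_n0:
  assumes "finite Ua" "finite Sb" "\<And>c. 0 \<le> \<alpha> c" "\<And>s. 0 \<le> \<beta> s" "sum \<beta> Sb < 1"
  shows "(zweight \<alpha> \<beta> has_sum (sum \<alpha> Ua ^ n / (1 - sum \<beta> Sb) ^ Suc n))
           {w. set w \<subseteq> letters Ua Sb \<and> n0 (binw w) = n}"
proof (rule has_sum_nonneg_fibres[where h = "\<lambda>w. n1 (binw w)"])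
  show "0 \<le> zweight \<alpha> \<beta> w" for w using assms(3,4) by (rule zweight_nonneg)
  show "(zweight \<alpha> \<beta> has_sum (real ((n + m) choose n) * sum \<alpha> Ua ^ n * sum \<beta> Sb ^ m))
          {w \<in> {w. set w \<subseteq> letters Ua Sb \<and> n0 (binw w) = n}. n1 (binw w) = m}" for m
    using has_sum_zweight_counts[OF assms(1,2), of \<alpha> \<beta> n m] by (simp add: conj_assoc)
  have "0 \<le> sum \<beta> Sb" using assms(4) by (simp add: sum_nonneg)
  then show "((\<lambda>m. real ((n + m) choose n) * sum \<alpha> Ua ^ n * sum \<beta> Sb ^ m) has_sum
          (sum \<alpha> Ua ^ n / (1 - sum \<beta> Sb) ^ Suc n)) UNIV"
    using has_sum_cmult_right[OF has_sum_negative_binomial[where x = "sum \<beta> Sb" and n = n],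
        of "sum \<alpha> Ua ^ n"] assms(5)
    by (simp add: mult_ac)
qed

lemma has_sum_zweight_n1:
  assumes "finite Ua" "finite Sb" "\<And>c. 0 \<le> \<alpha> c" "\<And>s. 0 \<le> \<beta> s" "sum \<alpha> Ua < 1"
  shows "(zweight \<alpha> \<beta> has_sum (sum \<beta> Sb ^ m / (1 - sum \<alpha> Ua) ^ Suc m))
           {w. set w \<subseteq> letters Ua Sb \<and> n1 (binw w) = m}"
proof (rule has_sum_nonneg_fibres[where h = "\<lambda>w. n0 (binw w)"])
  show "0 \<le> zweight \<alpha> \<beta> w" for w using assms(3,4) by (rule zweight_nonneg)
  show "(zweight \<alpha> \<beta> has_sum (real ((m + n) choose m) * sum \<alpha> Ua ^ n * sum \<beta> Sb ^ m))
          {w \<in> {w. set w \<subseteq> letters Ua Sb \<and> n1 (binw w) = m}. n0 (binw w) = n}" for n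
    using has_sum_zweight_counts[OF assms(1,2), of \<alpha> \<beta> n m] binomial_symmetric[of m "m + n"]
    by (simp add: conj_ac add.commute[of m n])
  have "0 \<le> sum \<alpha> Ua" using assms(3) by (simp add: sum_nonneg)
  then show "((\<lambda>n. real ((m + n) choose m) * sum \<alpha> Ua ^ n * sum \<beta> Sb ^ m) has_sum
          (sum \<beta> Sb ^ m / (1 - sum \<alpha> Ua) ^ Suc m)) UNIV"
    using has_sum_cmult_right[OF has_sum_negative_binomial[where x = "sum \<alpha> Ua" and n = m],
        of "sum \<beta> Sb ^ m"] assms(5)
    by (simp add: mult_ac)
qed

lemma has_sum_zweight_words:
  assumes "finite Ua" "finite Sb" "\<And>c. 0 \<le> \<alpha> c" "\<And>s. 0 \<le> \<beta> s" "sum \<alpha> Ua + sum \<beta> Sb < 1"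
  shows "(zweight \<alpha> \<beta> has_sum (1 / (1 - (sum \<alpha> Ua + sum \<beta> Sb)))) {w. set w \<subseteq> letters Ua Sb}"
proof (rule has_sum_nonneg_fibres[where h = length])
  show "0 \<le> zweight \<alpha> \<beta> w" for w using assms(3,4) by (rule zweight_nonneg)
  show "(zweight \<alpha> \<beta> has_sum (sum \<alpha> Ua + sum \<beta> Sb) ^ r)
          {w \<in> {w. set w \<subseteq> letters Ua Sb}. length w = r}" for r
    using has_sum_zweight_length[OF assms(1,2)] by simp
  have "0 \<le> sum \<alpha> Ua + sum \<beta> Sb" using assms(3,4) by (simp add: sum_nonneg)
  then show "((\<lambda>r. (sum \<alpha> Ua + sum \<beta> Sb) ^ r) has_sum (1 / (1 - (sum \<alpha> Ua + sum \<beta> Sb)))) UNIV"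
    using assms(5) by (rule has_sum_geometric)
qed

section \<open>The state space of Z_N\<close>

lemma admissible_seg_iff_letters:
  "admissible_seg E S l w \<longleftrightarrow>
     set w \<subseteq> letters (Uset E (set (take (Suc l) S))) (set (drop (Suc l) S))"
  unfolding admissible_seg_def letters_def
proof (intro iffI subsetI ballI)
  fix x assume "\<forall>x\<in>set w. case x of Cust c \<Rightarrow> c \<in> Uset E (set (take (Suc l) S))
                                  | Serv s \<Rightarrow> s \<in> set (drop (Suc l) S)" "x \<in> set w"
  then show "x \<in> Cust ` Uset E (set (take (Suc l) S)) \<union> Serv ` set (drop (Suc l) S)"
    by (cases x) auto
next
  fix x assume "set w \<subseteq> Cust ` Uset E (set (take (Suc l) S)) \<union> Serv ` set (drop (Suc l) S)"
    "x \<in> set w"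
  then show "case x of Cust c \<Rightarrow> c \<in> Uset E (set (take (Suc l) S))
                      | Serv s \<Rightarrow> s \<in> set (drop (Suc l) S)"
    by (cases x) auto
qed

lemma servers_ahead_if_admissible:
  "\<forall>l<length ws. admissible_seg E S l (ws ! l) \<Longrightarrow> servers_ahead S ws"
  unfolding servers_ahead_def admissible_seg_def by fastforce

lemma length_permutation:
  "distinct S \<Longrightarrow> set S = (UNIV :: 's::finite set) \<Longrightarrow> length S = CARD('s)"
  by (metis distinct_card)

lemma Zspace_decompose:
  fixes E :: "'c \<Rightarrow> 's::finite \<Rightarrow> bool"
  assumes "z \<in> Zspace E"
  shows "distinct (Sseq z)" "set (Sseq z) = UNIV" "length (segs z) = CARD('s) - 1"
    "\<forall>l < CARD('s) - 1. admissible_seg E (Sseq z) l (segs z ! l)"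
    "z = assemble (Sseq z) (segs z)"
proof -
  obtain S ws where z: "z = assemble S ws" and S: "distinct S" "set S = UNIV"
    and len: "length ws = CARD('s) - 1" and adm: "\<forall>l < length ws. admissible_seg E S l (ws ! l)"
    using assms unfolding Zspace_def by blast
  have "length S = Suc (length ws)"
    using length_permutation[OF S] len S(2) by (cases S) auto
  moreover have "servers_ahead S ws" using adm by (rule servers_ahead_if_admissible)
  ultimately have "Sseq z = S" "segs z = ws"
    using S(1) by (simp_all add: z Sseq_assemble segs_assemble)
  then show "distinct (Sseq z)" "set (Sseq z) = UNIV" "length (segs z) = CARD('s) - 1"
    "\<forall>l < CARD('s) - 1. admissible_seg E (Sseq z) l (segs z ! l)" "z = assemble (Sseq z) (segs z)"
    using S len adm z by simp_all
qed

lemma zweight_assemble_permutation: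
  assumes "distinct S" "set S = (UNIV :: 's::finite set)"
  shows "zweight \<alpha> \<beta> (assemble S (map f [0..<CARD('s) - 1]))
           = prod \<beta> UNIV * (\<Prod>l<CARD('s) - 1. zweight \<alpha> \<beta> (f l))"
proof -
  have "length S = Suc (CARD('s) - 1)"
    using length_permutation[OF assms] by simp
  moreover have "prod_list (map \<beta> S) = prod \<beta> UNIV"
    using assms by (simp flip: prod.distinct_set_conv_list)
  moreover have "prod_list (map (zweight \<alpha> \<beta>) (map f [0..<n])) = (\<Prod>l<n. zweight \<alpha> \<beta> (f l))" for n
    by (simp flip: prod.distinct_set_conv_list add: atLeast0LessThan)
  ultimately show ?thesis
    by (simp add: zweight_assemble)
qed

lemma bij_betw_assemble_Zspace:
  fixes E :: "'c \<Rightarrow> 's::finite \<Rightarrow> bool"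
  defines "n \<equiv> CARD('s) - 1"
  assumes S: "distinct S" "set S = UNIV"
    and A: "\<And>l. l < n \<Longrightarrow> A l \<subseteq> {w. admissible_seg E S l w}"
  shows "bij_betw (\<lambda>f. assemble S (map f [0..<n])) (PiE {..<n} A)
           {z \<in> Zspace E. Sseq z = S \<and> (\<forall>l<n. segs z ! l \<in> A l)}"
proof (rule bij_betwI[where g = "\<lambda>z. restrict (\<lambda>l. segs z ! l) {..<n}"])
  let ?Z = "{z \<in> Zspace E. Sseq z = S \<and> (\<forall>l<n. segs z ! l \<in> A l)}"
  have length_S: "length S = Suc (length (map f [0..<n]))" for f :: "nat \<Rightarrow> ('c, 's) letter list"
    using length_permutation[OF S] by (simp add: n_def)
  have admissible: "\<forall>l<length (map f [0..<n]). admissible_seg E S l (map f [0..<n] ! l)"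
    if "f \<in> PiE {..<n} A" for f
    using that A by auto
  have parse: "Sseq (assemble S (map f [0..<n])) = S"
    "segs (assemble S (map f [0..<n])) = map f [0..<n]"
    if "f \<in> PiE {..<n} A" for f
    using S(1) length_S servers_ahead_if_admissible[OF admissible[OF that]]
    by (simp_all only: Sseq_assemble segs_assemble)
  show "(\<lambda>f. assemble S (map f [0..<n])) \<in> PiE {..<n} A \<rightarrow> ?Z"
  proof
    fix f assume f: "f \<in> PiE {..<n} A"
    have "assemble S (map f [0..<n]) \<in> Zspace E"
      unfolding Zspace_def using S admissible[OF f] by (auto simp: n_def intro!: exI[of _ S])
    then show "assemble S (map f [0..<n]) \<in> ?Z"
      using f parse[OF f] by auto
  qed
  show "(\<lambda>z. restrict (\<lambda>l. segs z ! l) {..<n}) \<in> ?Z \<rightarrow> PiE {..<n} A"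
    by auto
  show "restrict (\<lambda>l. segs (assemble S (map f [0..<n])) ! l) {..<n} = f" if "f \<in> PiE {..<n} A" for f
    using that parse[OF that] by (auto simp: PiE_def extensional_def)
  show "assemble S (map (restrict (\<lambda>l. segs z ! l) {..<n}) [0..<n]) = z"
    if "z \<in> ?Z" for z
  proof -
    have "map (restrict (\<lambda>l. segs z ! l) {..<n}) [0..<n] = segs z"
      using that Zspace_decompose(3)[of z E] by (intro nth_equalityI) (auto simp: n_def)
    then show ?thesis using that Zspace_decompose(5)[of z E] by simp
  qed
qed

section \<open>Marginals of the stationary distribution\<close>

lemma pmf_map_pmf_infsum: "pmf (map_pmf F p) y = infsum (pmf p) (F -` {y})"
  unfolding pmf_map measure_pmf_conv_infsetsum by (rule infsetsum_infsum[OF pmf_abs_summable])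

locale stationary_Z =
  fixes E :: "'c::finite \<Rightarrow> 's::finite \<Rightarrow> bool"
    and \<alpha> :: "'c \<Rightarrow> real" and \<beta> :: "'s \<Rightarrow> real"
    and B :: real and p :: "('c, 's) letter list pmf"
  assumes alpha_pos: "\<And>c. \<alpha> c > 0" and alpha_sum: "sum \<alpha> UNIV = 1"
    and beta_pos: "\<And>s. \<beta> s > 0" and beta_sum: "sum \<beta> UNIV = 1"
    and crp: "complete_resource_pooling E \<alpha> \<beta>"
    and pmf_p: "\<And>z. pmf p z = (if z \<in> Zspace E then B * zweight \<alpha> \<beta> z else 0)"
begin

lemma pmf_map_segmentwise:
  defines "n \<equiv> CARD('s) - 1"
  assumes S: "distinct S" "set S = UNIV"
    and A: "\<And>l. l < n \<Longrightarrow> A l \<subseteq> {w. admissible_seg E S l w}"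
    and sums: "\<And>l. l < n \<Longrightarrow> (zweight \<alpha> \<beta> has_sum v l) (A l)"
    and fibre: "\<And>z. z \<in> Zspace E \<Longrightarrow> F z = y \<longleftrightarrow> Sseq z = S \<and> (\<forall>l<n. segs z ! l \<in> A l)"
  shows "pmf (map_pmf F p) y = B * prod \<beta> UNIV * (\<Prod>l<n. v l)"
proof -
  let ?Z = "{z \<in> Zspace E. Sseq z = S \<and> (\<forall>l<n. segs z ! l \<in> A l)}"
  have "pmf (map_pmf F p) y = infsum (pmf p) ?Z"
    unfolding pmf_map_pmf_infsum using fibre pmf_p by (intro infsum_cong_neutral) auto
  also have "\<dots> = infsum (\<lambda>f. pmf p (assemble S (map f [0..<n]))) (PiE {..<n} A)"
    using bij_betw_assemble_Zspace[OF S A] unfolding n_def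
    by (rule infsum_reindex_bij_betw[symmetric])
  also have "\<dots> = infsum (\<lambda>f. B * prod \<beta> UNIV * (\<Prod>l<n. zweight \<alpha> \<beta> (f l))) (PiE {..<n} A)"
    using bij_betw_apply[OF bij_betw_assemble_Zspace[OF S A, folded n_def]]
    by (intro infsum_cong)
      (simp add: pmf_p zweight_assemble_permutation[OF S, folded n_def] mult.assoc)
  also have "\<dots> = B * prod \<beta> UNIV * (\<Prod>l<n. infsum (zweight \<alpha> \<beta>) (A l))"
  proof -
    have "Infinite_Sum.abs_summable_on (zweight \<alpha> \<beta>) (A l)" if "l \<in> {..<n}" for l
      using that sums
      by (intro summable_on_iff_abs_summable_on_real[THEN iffD1] has_sum_imp_summable) auto
    then have "infsum (\<lambda>f. \<Prod>l\<in>{..<n}. zweight \<alpha> \<beta> (f l)) (PiE {..<n} A)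
               = (\<Prod>l\<in>{..<n}. infsum (zweight \<alpha> \<beta>) (A l))"
      by (intro infsum_prod_PiE_abs) auto
    then show ?thesis by (simp add: infsum_cmult_right')
  qed
  also have "\<dots> = B * prod \<beta> UNIV * (\<Prod>l<n. v l)"
    using sums by (intro arg_cong[where f = "(*) _"] prod.cong) (auto intro: infsumI)
  finally show ?thesis .
qed

lemma pmf_map_segment_statistic:
  assumes S: "distinct S" "set S = UNIV" and len: "length ts = CARD('s) - 1"
    and sums: "\<And>l. l < CARD('s) - 1 \<Longrightarrow>
                 (zweight \<alpha> \<beta> has_sum v l) {w. admissible_seg E S l w \<and> g w = ts ! l}"
  shows "pmf (map_pmf (\<lambda>z. (Sseq z, map g (segs z))) p) (S, ts)
           = B * prod \<beta> UNIV * (\<Prod>l<CARD('s) - 1. v l)"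
proof (rule pmf_map_segmentwise[OF S _ sums])
  fix z assume z: "z \<in> Zspace E"
  show "(Sseq z, map g (segs z)) = (S, ts) \<longleftrightarrow>
          Sseq z = S \<and> (\<forall>l<CARD('s) - 1. segs z ! l \<in> {w. admissible_seg E S l w \<and> g w = ts ! l})"
  proof (cases "Sseq z = S")
    case True
    then show ?thesis
      using Zspace_decompose(3,4)[OF z] len by (auto simp: list_eq_iff_nth_eq[where xs = "map g _"])
  qed simp
qed auto

lemma prefix_masses:
  assumes S: "distinct S" "set S = UNIV" and l: "l < CARD('s) - 1"
  defines "T \<equiv> set (take (Suc l) S)"
  shows "sum \<beta> (set (drop (Suc l) S)) = 1 - sum \<beta> T"
    and "sum \<alpha> (Uset E T) = 1 - sum \<alpha> (Cset E (set (drop (Suc l) S)))"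
    and "sum \<alpha> (Uset E T) < sum \<beta> T"
    and "0 < sum \<beta> T"
proof -
  have "T \<union> set (drop (Suc l) S) = UNIV"
    using S(2) unfolding T_def set_append[symmetric] append_take_drop_id .
  moreover have "T \<inter> set (drop (Suc l) S) = {}"
    unfolding T_def by (rule set_take_disj_set_drop_if_distinct[OF S(1)]) simp
  ultimately have drop_eq: "set (drop (Suc l) S) = UNIV - T" by blast
  have "set (drop (Suc l) S) \<noteq> {}"
    using l length_permutation[OF S] by simp
  then have "T \<noteq> UNIV" using drop_eq by auto
  moreover have "T \<noteq> {}" using S(2) by (cases S) (auto simp: T_def)
  ultimately show "sum \<alpha> (Uset E T) < sum \<beta> T" "0 < sum \<beta> T"
    using crp beta_pos unfolding complete_resource_pooling_def by (auto intro: sum_pos)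
  show "sum \<beta> (set (drop (Suc l) S)) = 1 - sum \<beta> T"
    using beta_sum by (simp add: drop_eq sum_diff)
  show "sum \<alpha> (Uset E T) = 1 - sum \<alpha> (Cset E (set (drop (Suc l) S)))"
    using alpha_sum by (simp add: drop_eq Uset_def sum_diff)
qed

lemma alpha_nonneg: "0 \<le> \<alpha> c"
  using alpha_pos less_imp_le by blast

lemma beta_nonneg: "0 \<le> \<beta> s"
  using beta_pos less_imp_le by blast

lemma pmf_W_of:
  assumes "distinct S" "set S = UNIV" "length ws = CARD('s) - 1"
  shows "pmf (map_pmf W_of p) (S, ws) = B * prod \<beta> UNIV *
           (\<Prod>l<CARD('s) - 1. sum \<alpha> (Uset E (set (take (Suc l) S))) ^ n0 (ws ! l)
                              * sum \<beta> (set (drop (Suc l) S)) ^ n1 (ws ! l))"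
  unfolding W_of_def[abs_def] using assms
  by (intro pmf_map_segment_statistic)
    (simp_all add: admissible_seg_iff_letters has_sum_zweight_pattern)

lemma pmf_U_of:
  assumes "distinct S" "set S = UNIV" "length nm = CARD('s) - 1"
  shows "pmf (map_pmf U_of p) (S, nm) = B * prod \<beta> UNIV *
           (\<Prod>l<CARD('s) - 1. real ((fst (nm ! l) + snd (nm ! l)) choose fst (nm ! l))
                              * sum \<alpha> (Uset E (set (take (Suc l) S))) ^ fst (nm ! l)
                              * sum \<beta> (set (drop (Suc l) S)) ^ snd (nm ! l))"
  unfolding U_of_def[abs_def] using assms
  by (intro pmf_map_segment_statistic)
    (simp_all add: admissible_seg_iff_letters prod_eq_iff has_sum_zweight_counts)

lemma pmf_X_of:
  assumes "distinct S" "set S = UNIV" "length ns = CARD('s) - 1"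
  shows "pmf (map_pmf X_of p) (S, ns) = B * prod \<beta> UNIV *
           (\<Prod>l<CARD('s) - 1. sum \<alpha> (Uset E (set (take (Suc l) S))) ^ (ns ! l)
                              / sum \<beta> (set (take (Suc l) S)) ^ (ns ! l + 1))"
  unfolding X_of_def[abs_def]
proof (rule pmf_map_segment_statistic[OF assms])
  fix l assume "l < CARD('s) - 1"
  note masses = prefix_masses[OF assms(1,2) this]
  then have "sum \<beta> (set (drop (Suc l) S)) < 1"
    "1 - sum \<beta> (set (drop (Suc l) S)) = sum \<beta> (set (take (Suc l) S))"
    by linarith+
  then show "(zweight \<alpha> \<beta> has_sum sum \<alpha> (Uset E (set (take (Suc l) S))) ^ (ns ! l)
                              / sum \<beta> (set (take (Suc l) S)) ^ (ns ! l + 1))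
          {w. admissible_seg E S l w \<and> n0 (binw w) = ns ! l}"
    using has_sum_zweight_n0[of "Uset E (set (take (Suc l) S))" "set (drop (Suc l) S)" \<alpha> \<beta> "ns ! l"]
    by (simp add: admissible_seg_iff_letters alpha_nonneg beta_nonneg)
qed

lemma pmf_Y_of:
  assumes "distinct S" "set S = UNIV" "length ms = CARD('s) - 1"
  shows "pmf (map_pmf Y_of p) (S, ms) = B * prod \<beta> UNIV *
           (\<Prod>l<CARD('s) - 1. sum \<beta> (set (drop (Suc l) S)) ^ (ms ! l)
                              / sum \<alpha> (Cset E (set (drop (Suc l) S))) ^ (ms ! l + 1))"
  unfolding Y_of_def[abs_def]
proof (rule pmf_map_segment_statistic[OF assms])
  fix l assume "l < CARD('s) - 1"
  note masses = prefix_masses[OF assms(1,2) this]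
  have "0 \<le> sum \<beta> (set (drop (Suc l) S))"
    using beta_nonneg by (simp add: sum_nonneg)
  then have "sum \<alpha> (Uset E (set (take (Suc l) S))) < 1"
    "1 - sum \<alpha> (Uset E (set (take (Suc l) S))) = sum \<alpha> (Cset E (set (drop (Suc l) S)))"
    using masses(1-3) by linarith+
  then show "(zweight \<alpha> \<beta> has_sum sum \<beta> (set (drop (Suc l) S)) ^ (ms ! l)
                              / sum \<alpha> (Cset E (set (drop (Suc l) S))) ^ (ms ! l + 1))
          {w. admissible_seg E S l w \<and> n1 (binw w) = ms ! l}"
    using has_sum_zweight_n1[of "Uset E (set (take (Suc l) S))" "set (drop (Suc l) S)" \<alpha> \<beta> "ms ! l"]
    by (simp add: admissible_seg_iff_letters alpha_nonneg beta_nonneg)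
qed

lemma pmf_V_of:
  assumes "distinct S" "set S = UNIV" "length rs = CARD('s) - 1"
  shows "pmf (map_pmf V_of p) (S, rs) = B * prod \<beta> UNIV *
           (\<Prod>l<CARD('s) - 1. (sum \<alpha> (Uset E (set (take (Suc l) S)))
                                + sum \<beta> (set (drop (Suc l) S))) ^ (rs ! l))"
proof -
  have "n0 (binw w) + n1 (binw w) = length w" for w :: "('c, 's) letter list"
    by (simp add: n0_add_n1 binw_def)
  then show ?thesis
    unfolding V_of_def[abs_def] using assms
    by (intro pmf_map_segment_statistic)
      (simp_all add: admissible_seg_iff_letters has_sum_zweight_length)
qed

lemma pmf_R_of:
  assumes "distinct S" "set S = UNIV"
  shows "pmf (map_pmf R_of p) S = B * prod \<beta> UNIV *
           (\<Prod>l<CARD('s) - 1. 1 / (sum \<beta> (set (take (Suc l) S))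
                                    - sum \<alpha> (Uset E (set (take (Suc l) S)))))"
proof (rule pmf_map_segmentwise[OF assms])
  fix l assume "l < CARD('s) - 1"
  note masses = prefix_masses[OF assms this]
  then have "sum \<alpha> (Uset E (set (take (Suc l) S))) + sum \<beta> (set (drop (Suc l) S)) < 1"
    and total: "1 - (sum \<alpha> (Uset E (set (take (Suc l) S))) + sum \<beta> (set (drop (Suc l) S)))
       = sum \<beta> (set (take (Suc l) S)) - sum \<alpha> (Uset E (set (take (Suc l) S)))"
    by linarith+
  then have "(zweight \<alpha> \<beta> has_sum 1 / (1 - (sum \<alpha> (Uset E (set (take (Suc l) S)))
                                        + sum \<beta> (set (drop (Suc l) S)))))
               {w. set w \<subseteq> letters (Uset E (set (take (Suc l) S))) (set (drop (Suc l) S))}"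
    by (intro has_sum_zweight_words) (simp_all add: alpha_nonneg beta_nonneg)
  then show "(zweight \<alpha> \<beta> has_sum 1 / (sum \<beta> (set (take (Suc l) S))
                                        - sum \<alpha> (Uset E (set (take (Suc l) S)))))
          {w. admissible_seg E S l w}"
    by (simp only: total admissible_seg_iff_letters)
qed (auto simp: R_of_def dest: Zspace_decompose(4))

end

theorem theorem5p2:
  fixes E :: "'c::finite \<Rightarrow> 's::finite \<Rightarrow> bool"
    and \<alpha> :: "'c \<Rightarrow> real" and \<beta> :: "'s \<Rightarrow> real"
    and B :: real and p :: "('c, 's) letter list pmf"
  assumes conn: "bip_connected E"
    and alpha_pos: "\<forall>c. \<alpha> c > 0" and alpha_sum: "sum \<alpha> UNIV = 1"
    and beta_pos: "\<forall>s. \<beta> s > 0" and beta_sum: "sum \<beta> UNIV = 1"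
    and crp: "complete_resource_pooling E \<alpha> \<beta>"
    and B_pos: "B > 0"
    and piZ: "\<forall>z. pmf p z = (if z \<in> Zspace E then B * zweight \<alpha> \<beta> z else 0)"
  shows "\<forall>S. distinct S \<and> set S = UNIV \<longrightarrow>
    (\<forall>ws. length ws = CARD('s) - 1 \<longrightarrow>
       pmf (map_pmf W_of p) (S, ws) = B * prod \<beta> UNIV *
         (\<Prod>l<CARD('s) - 1. sum \<alpha> (Uset E (set (take (Suc l) S))) ^ n0 (ws ! l)
                            * sum \<beta> (set (drop (Suc l) S)) ^ n1 (ws ! l))) \<and>
    (\<forall>nm. length nm = CARD('s) - 1 \<longrightarrow>
       pmf (map_pmf U_of p) (S, nm) = B * prod \<beta> UNIV *
         (\<Prod>l<CARD('s) - 1. real ((fst (nm ! l) + snd (nm ! l)) choose fst (nm ! l))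
                            * sum \<alpha> (Uset E (set (take (Suc l) S))) ^ fst (nm ! l)
                            * sum \<beta> (set (drop (Suc l) S)) ^ snd (nm ! l))) \<and>
    (\<forall>ns. length ns = CARD('s) - 1 \<longrightarrow>
       pmf (map_pmf X_of p) (S, ns) = B * prod \<beta> UNIV *
         (\<Prod>l<CARD('s) - 1. sum \<alpha> (Uset E (set (take (Suc l) S))) ^ (ns ! l)
                            / sum \<beta> (set (take (Suc l) S)) ^ (ns ! l + 1))) \<and>
    (\<forall>ms. length ms = CARD('s) - 1 \<longrightarrow>
       pmf (map_pmf Y_of p) (S, ms) = B * prod \<beta> UNIV *
         (\<Prod>l<CARD('s) - 1. sum \<beta> (set (drop (Suc l) S)) ^ (ms ! l)
                            / sum \<alpha> (Cset E (set (drop (Suc l) S))) ^ (ms ! l + 1))) \<and>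
    (\<forall>rs. length rs = CARD('s) - 1 \<longrightarrow>
       pmf (map_pmf V_of p) (S, rs) = B * prod \<beta> UNIV *
         (\<Prod>l<CARD('s) - 1. (sum \<alpha> (Uset E (set (take (Suc l) S)))
                              + sum \<beta> (set (drop (Suc l) S))) ^ (rs ! l))) \<and>
    pmf (map_pmf R_of p) S = B * prod \<beta> UNIV *
         (\<Prod>l<CARD('s) - 1. 1 / (sum \<beta> (set (take (Suc l) S))
                                  - sum \<alpha> (Uset E (set (take (Suc l) S)))))"
proof -
  interpret stationary_Z E \<alpha> \<beta> B p
    using alpha_pos alpha_sum beta_pos beta_sum crp piZ by unfold_locales auto
  show ?thesis
    by (auto simp: pmf_W_of pmf_U_of pmf_X_of pmf_Y_of pmf_V_of pmf_R_of)
qed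

end
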